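(* Let $(\mathsf{X},\mu)$, $(\mathsf{Y},\nu)$ be Polish probability spaces, $c:\mathsf{X}\times\mathsf{Y}\to[0,\infty)$ continuous, $\pi_\varepsilon$ the $(c,\varepsilon)$-cyclically invariant coupling for each $\varepsilon>0$ (assumed to exist), and assume $\pi_\varepsilon\to\pi_*$ weakly as $\varepsilon\to0$ for some $\pi_*\in\Pi(\mu,\nu)$. Let $\Gamma:=\operatorname{spt}\pi_*$, $\mathsf{X}_0:=\operatorname{proj}_{\mathsf{X}}\Gamma$, $\mathsf{Y}_0:=\operatorname{proj}_{\mathsf{Y}}\Gamma$, and assume that for any $c$-convex functions $\psi_1,\psi_2$ on $\mathsf{X}$ with $\Gamma\subset\partial_c\psi_i$ ($i=1,2$), $\psi_1-\psi_2$ is constant on $\mathsf{X}_0$. Then for any open set $U\subset\mathsf{X}_0\times\mathsf{Y}_0$, $$\liminf_{\varepsilon\to0}\varepsilon\log\pi_\varepsilon(U)\ge-\inf_{(x,y)\in U}I(x,y).$$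
   Context: $\Pi(\mu,\nu)$ is the set of couplings of $\mu,\nu$ and $P:=\mu\otimes\nu$. A coupling $\pi$ is $(c,\varepsilon)$-cyclically invariant if $\pi\sim P$ and its density admits a version $\frac{d\pi}{dP}:\mathsf{X}\times\mathsf{Y}\to(0,\infty)$ with $\prod_{i=1}^k\frac{d\pi}{dP}(x_i,y_i)=\exp\big(-\frac1\varepsilon[\sum_{i=1}^k c(x_i,y_i)-\sum_{i=1}^k c(x_i,y_{i+1})]\big)\prod_{i=1}^k\frac{d\pi}{dP}(x_i,y_{i+1})$ for all $k$ and points, $y_{k+1}:=y_1$. A proper $\psi:\mathsf{X}\to(-\infty,\infty]$ is $c$-convex if $\psi(x)=\sup_{y}[\zeta(y)-c(x,y)]$ for some $\zeta:\mathsf{Y}\to[-\infty,\infty]$; $\psi^c(y):=\inf_x[\psi(x)+c(x,y)]$ and $\partial_c\psi=\{(x,y):\psi^c(y)-\psi(x)=c(x,y)\}$. The function $I$ is $I(x,y):=\sup_{k\ge2}\sup_{(x_i,y_i)_{i=2}^k\subset\Gamma}\sup_{\sigma\in\Sigma(k)}\sum_{i=1}^k c(x_i,y_i)-\sum_{i=1}^k c(x_i,y_{\sigma(i)})$ with $(x_1,y_1):=(x,y)$ and $\Sigma(k)$ the permutations of $\{1,\dots,k\}$. Topology on $\mathsf{X}_0\times\mathsf{Y}_0$ is the relative one. *)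

theory Defs
  imports "HOL-Probability.Probability"
begin

definition coupling :: "'a measure \<Rightarrow> 'b measure \<Rightarrow> ('a \<times> 'b) measure \<Rightarrow> bool" where
  "coupling \<mu> \<nu> \<pi> \<longleftrightarrow> prob_space \<pi> \<and> sets \<pi> = sets (\<mu> \<Otimes>\<^sub>M \<nu>) \<and>
     distr \<pi> \<mu> fst = \<mu> \<and> distr \<pi> \<nu> snd = \<nu>"

definition cyc_inv_coupling ::
  "('a \<Rightarrow> 'b \<Rightarrow> real) \<Rightarrow> real \<Rightarrow> 'a measure \<Rightarrow> 'b measure \<Rightarrow> ('a \<times> 'b) measure \<Rightarrow> bool" where
  "cyc_inv_coupling c \<epsilon> \<mu> \<nu> \<pi> \<longleftrightarrow> coupling \<mu> \<nu> \<pi> \<and>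
     absolutely_continuous (\<mu> \<Otimes>\<^sub>M \<nu>) \<pi> \<and> absolutely_continuous \<pi> (\<mu> \<Otimes>\<^sub>M \<nu>) \<and>
     (\<exists>f :: 'a \<times> 'b \<Rightarrow> real. f \<in> borel_measurable (\<mu> \<Otimes>\<^sub>M \<nu>) \<and> (\<forall>z. 0 < f z) \<and>
        \<pi> = density (\<mu> \<Otimes>\<^sub>M \<nu>) (\<lambda>z. ennreal (f z)) \<and>
        (\<forall>(k::nat) (x::nat \<Rightarrow> 'a) (y::nat \<Rightarrow> 'b). k \<ge> 1 \<longrightarrow>
           (\<Prod>i<k. f (x i, y i)) =
             exp (- (1 / \<epsilon>) * ((\<Sum>i<k. c (x i) (y i)) - (\<Sum>i<k. c (x i) (y ((i + 1) mod k)))))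
             * (\<Prod>i<k. f (x i, y ((i + 1) mod k)))))"

definition weak_conv_filter :: "('i \<Rightarrow> 'a::topological_space measure) \<Rightarrow> 'a measure \<Rightarrow> 'i filter \<Rightarrow> bool" where
  "weak_conv_filter M M0 F \<longleftrightarrow>
     (\<forall>g :: 'a \<Rightarrow> real. continuous_on UNIV g \<and> bounded (range g) \<longrightarrow>
        ((\<lambda>i. integral\<^sup>L (M i) g) \<longlongrightarrow> integral\<^sup>L M0 g) F)"

definition msupport :: "'a::topological_space measure \<Rightarrow> 'a set" where
  "msupport M = {z. \<forall>U. open U \<and> z \<in> U \<longrightarrow> emeasure M U > 0}"

definition c_convex :: "('a \<Rightarrow> 'b \<Rightarrow> real) \<Rightarrow> ('a \<Rightarrow> ereal) \<Rightarrow> bool" where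
  "c_convex c \<psi> \<longleftrightarrow> (\<forall>x. \<psi> x \<noteq> -\<infinity>) \<and> (\<exists>x. \<psi> x \<noteq> \<infinity>) \<and>
     (\<exists>\<zeta> :: 'b \<Rightarrow> ereal. \<forall>x. \<psi> x = (SUP y. \<zeta> y - ereal (c x y)))"

definition c_transform :: "('a \<Rightarrow> 'b \<Rightarrow> real) \<Rightarrow> ('a \<Rightarrow> ereal) \<Rightarrow> 'b \<Rightarrow> ereal" where
  "c_transform c \<psi> y = (INF x. \<psi> x + ereal (c x y))"

text \<open>c-subdifferential; psi x is required finite so that the difference is meaningful.\<close>
definition c_subdiff :: "('a \<Rightarrow> 'b \<Rightarrow> real) \<Rightarrow> ('a \<Rightarrow> ereal) \<Rightarrow> ('a \<times> 'b) set" where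
  "c_subdiff c \<psi> = {(x, y). \<psi> x \<noteq> \<infinity> \<and> c_transform c \<psi> y - \<psi> x = ereal (c x y)}"

definition rate_I :: "('a \<Rightarrow> 'b \<Rightarrow> real) \<Rightarrow> ('a \<times> 'b) set \<Rightarrow> 'a \<Rightarrow> 'b \<Rightarrow> ereal" where
  "rate_I c \<Gamma> x y = (SUP t \<in> {(k, xs, ys, \<sigma>) | (k::nat) (xs::nat \<Rightarrow> 'a) (ys::nat \<Rightarrow> 'b) \<sigma>.
        k \<ge> 2 \<and> xs 0 = x \<and> ys 0 = y \<and> (\<forall>i\<in>{1..<k}. (xs i, ys i) \<in> \<Gamma>) \<and> \<sigma> permutes {..<k}}.
     (case t of (k, xs, ys, \<sigma>) \<Rightarrow>
        ereal ((\<Sum>i<k. c (xs i) (ys i)) - (\<Sum>i<k. c (xs i) (ys (\<sigma> i))))))"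

definition eln :: "ennreal \<Rightarrow> ereal" where
  "eln t = (if t = 0 then -\<infinity> else if t = \<top> then \<infinity> else ereal (ln (enn2real t)))"

end

(*
  Already for two-point cycles, (c,eps)-cyclic invariance forces the density of pi_eps to be
  a product A(x) B(y) exp(-c(x,y)/eps).  Hence for small balls around points (x_i, y_i),
  i < k, the A- and B-masses cancel when the rectangles around the pairs (x_i, y_i) are
  compared with those around the shifted pairs (x_i, y_(i-1)); up to a factor exp(O(delta)/eps),
    prod_i pi_eps(box_(i,i)) <= exp(-g/eps) * prod_i pi_eps(box_(i,i-1)),
  where g = sum_i c(x_i, y_i) - sum_i c(x_i, y_(i-1)) is the gain of the cycle.  When all
  (x_i, y_i) lie in Gamma = spt pi_*, weak convergence keeps the left side bounded below, so
  every shifted box carries mass at least const * exp((g - o(1))/eps).  As masses are at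
  most 1, Gamma is c-cyclically monotone; and as soon as one shifted box lies in U, the
  liminf of eps log pi_eps(U) is at least g.

  For (x, y) in U choose (x, y') and (x', y) in Gamma, and let psi1, psi2 be Rockafellar's
  potentials of Gamma anchored at (x', y) and at (x, y').  Chains in Gamma closed up through
  (x, y) bound psi1(x) by I(x, y) and psi2(x') by the liminf.  Since psi1 - psi2 is constant
  on X_0 and psi1(x') = psi2(x) = 0, we get psi1(x) = -psi2(x'), and the two bounds add up
  to -I(x, y) <= liminf.
*)

theory Submission
  imports Defs
begin

definition cyc_pred :: "nat \<Rightarrow> nat \<Rightarrow> nat" where
  "cyc_pred k j = (if j = 0 then k - 1 else if j < k then j - 1 else j)"

lemma cyc_pred_permutes: "cyc_pred k permutes {..<k}"
proof (rule bij_imp_permutes)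
  show "bij_betw (cyc_pred k) {..<k} {..<k}"
    by (rule bij_betw_byWitness[where f'="\<lambda>i. if i = k - 1 then 0 else Suc i"])
       (auto simp: cyc_pred_def)
qed (auto simp: cyc_pred_def)

definition cyclic_gain :: "('a \<Rightarrow> 'b \<Rightarrow> real) \<Rightarrow> nat \<Rightarrow> (nat \<Rightarrow> 'a) \<Rightarrow> (nat \<Rightarrow> 'b) \<Rightarrow> real" where
  "cyclic_gain c k X Y = (\<Sum>j<k. c (X j) (Y j)) - (\<Sum>j<k. c (X j) (Y (cyc_pred k j)))"

definition c_cyclically_monotone :: "('a \<Rightarrow> 'b \<Rightarrow> real) \<Rightarrow> ('a \<times> 'b) set \<Rightarrow> bool" where
  "c_cyclically_monotone c G \<longleftrightarrow> (\<forall>k X Y. (\<forall>j<k. (X j, Y j) \<in> G) \<longrightarrow> cyclic_gain c k X Y \<le> 0)"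

(*
  Rockafellar's construction: rockafellar_potential c G a b x is the supremum, over chains
  (a, b) = (x_0, y_0), ..., (x_n, y_n) in G, of
    sum_(i<n) [c(x_i, y_i) - c(x_(i+1), y_i)] + c(x_n, y_n) - c(x, y_n);
  rockafellar_dual groups the chains by their last point y_n.
*)
definition chain_cost :: "('a \<Rightarrow> 'b \<Rightarrow> real) \<Rightarrow> nat \<Rightarrow> (nat \<Rightarrow> 'a) \<Rightarrow> (nat \<Rightarrow> 'b) \<Rightarrow> real" where
  "chain_cost c n xs ys = (\<Sum>i<n. c (xs i) (ys i) - c (xs (Suc i)) (ys i)) + c (xs n) (ys n)"

definition chains_from :: "('a \<times> 'b) set \<Rightarrow> 'a \<Rightarrow> 'b \<Rightarrow> 'b \<Rightarrow> (nat \<times> (nat \<Rightarrow> 'a) \<times> (nat \<Rightarrow> 'b)) set" where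
  "chains_from G a b y = {(n, xs, ys). xs 0 = a \<and> ys 0 = b \<and> (\<forall>i\<le>n. (xs i, ys i) \<in> G) \<and> ys n = y}"

definition rockafellar_dual :: "('a \<Rightarrow> 'b \<Rightarrow> real) \<Rightarrow> ('a \<times> 'b) set \<Rightarrow> 'a \<Rightarrow> 'b \<Rightarrow> 'b \<Rightarrow> ereal" where
  "rockafellar_dual c G a b y = (SUP (n, xs, ys) \<in> chains_from G a b y. ereal (chain_cost c n xs ys))"

definition rockafellar_potential :: "('a \<Rightarrow> 'b \<Rightarrow> real) \<Rightarrow> ('a \<times> 'b) set \<Rightarrow> 'a \<Rightarrow> 'b \<Rightarrow> 'a \<Rightarrow> ereal" where
  "rockafellar_potential c G a b x = (SUP y. rockafellar_dual c G a b y - ereal (c x y))"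

lemma cyclic_gain_cons_chain:
  "cyclic_gain c (Suc (Suc n)) (case_nat x xs) (case_nat y ys) =
     c x y + chain_cost c n xs ys - c x (ys n) - c (xs 0) y"
proof -
  have "(\<Sum>j<Suc (Suc n). c (case_nat x xs j) (case_nat y ys (cyc_pred (Suc (Suc n)) j))) =
      c x (ys n) + (\<Sum>i<Suc n. c (xs i) (case_nat y ys i))"
    unfolding sum.lessThan_Suc_shift by (simp add: cyc_pred_def)
  also have "\<dots> = c x (ys n) + c (xs 0) y + (\<Sum>i<n. c (xs (Suc i)) (ys i))"
    unfolding sum.lessThan_Suc_shift by simp
  finally show ?thesis
    unfolding cyclic_gain_def chain_cost_def sum_subtractf sum.lessThan_Suc_shift[of _ "Suc n"]
    by simp
qed

lemma rockafellar_dual_ge: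
  "(n, xs, ys) \<in> chains_from G a b y \<Longrightarrow> ereal (chain_cost c n xs ys) \<le> rockafellar_dual c G a b y"
  unfolding rockafellar_dual_def by (rule SUP_upper2) auto

lemma chain_cost_le_rate_I:
  assumes "(n, xs, ys) \<in> chains_from G a b y"
  shows "ereal (c x' y' + chain_cost c n xs ys - c x' y - c a y') \<le> rate_I c G x' y'"
proof -
  let ?k = "Suc (Suc n)"
  have "(?k, case_nat x' xs, case_nat y' ys, cyc_pred ?k) \<in>
      {(k, xs, ys, \<sigma>) | k xs ys \<sigma>. k \<ge> 2 \<and> xs 0 = x' \<and> ys 0 = y' \<and>
        (\<forall>i\<in>{1..<k}. (xs i, ys i) \<in> G) \<and> \<sigma> permutes {..<k}}"
    using assms cyc_pred_permutes[of ?k] by (auto simp: chains_from_def split: nat.split)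
  then have "ereal (cyclic_gain c ?k (case_nat x' xs) (case_nat y' ys)) \<le> rate_I c G x' y'"
    unfolding rate_I_def cyclic_gain_def by (rule SUP_upper2) simp
  then show ?thesis
    using assms by (simp add: cyclic_gain_cons_chain chains_from_def)
qed

lemma rockafellar_potential_le_chain_bound:
  assumes "\<And>n xs ys y'. (n, xs, ys) \<in> chains_from G a b y' \<Longrightarrow>
    ereal (c x y + chain_cost c n xs ys - c x y' - c a y) \<le> B"
  shows "rockafellar_potential c G a b x + ereal (c x y - c a y) \<le> B"
proof -
  have "rockafellar_potential c G a b x \<le> B - ereal (c x y - c a y)"
    unfolding rockafellar_potential_def
  proof (rule SUP_least)
    fix y'
    have "rockafellar_dual c G a b y' \<le> B - ereal (c x y - c a y) + ereal (c x y')"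
      unfolding rockafellar_dual_def
    proof (rule SUP_least, clarify)
      fix n xs ys assume "(n, xs, ys) \<in> chains_from G a b y'"
      from assms[OF this] show "ereal (chain_cost c n xs ys) \<le> B - ereal (c x y - c a y) + ereal (c x y')"
        by (cases B) auto
    qed
    then show "rockafellar_dual c G a b y' - ereal (c x y') \<le> B - ereal (c x y - c a y)"
      by (cases "rockafellar_dual c G a b y'"; cases B) auto
  qed
  then show ?thesis
    by (cases "rockafellar_potential c G a b x"; cases B) auto
qed

lemma rockafellar_potential_le_rate_I:
  "rockafellar_potential c G a b x + ereal (c x b - c a b) \<le> rate_I c G x b"
  by (rule rockafellar_potential_le_chain_bound) (rule chain_cost_le_rate_I)

context
  fixes c :: "'a \<Rightarrow> 'b \<Rightarrow> real" and G :: "('a \<times> 'b) set" and a :: 'a and b :: 'b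
  assumes anchor: "(a, b) \<in> G" and monotone: "c_cyclically_monotone c G"
begin

lemma chain_cost_le:
  assumes "(n, xs, ys) \<in> chains_from G a b y" and "(x', y') \<in> G"
  shows "chain_cost c n xs ys \<le> c a y' - c x' y' + c x' y"
proof -
  have "\<forall>j<Suc (Suc n). (case_nat x' xs j, case_nat y' ys j) \<in> G"
    using assms by (auto simp: chains_from_def less_Suc_eq_le split: nat.split)
  then have "cyclic_gain c (Suc (Suc n)) (case_nat x' xs) (case_nat y' ys) \<le> 0"
    using monotone unfolding c_cyclically_monotone_def by blast
  then show ?thesis
    using assms(1) by (simp add: cyclic_gain_cons_chain chains_from_def)
qed

lemma rockafellar_potential_ge: "ereal (c a b - c x b) \<le> rockafellar_potential c G a b x"
proof -
  have "ereal (c a b) \<le> rockafellar_dual c G a b b"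
    using rockafellar_dual_ge[of 0 "\<lambda>_. a" "\<lambda>_. b"] anchor by (simp add: chains_from_def chain_cost_def)
  then have "ereal (c a b - c x b) \<le> rockafellar_dual c G a b b - ereal (c x b)"
    by (cases "rockafellar_dual c G a b b") auto
  also have "\<dots> \<le> rockafellar_potential c G a b x"
    unfolding rockafellar_potential_def by (rule SUP_upper) simp
  finally show ?thesis .
qed

lemma rockafellar_potential_le:
  assumes "(x', y') \<in> G"
  shows "rockafellar_potential c G a b x' \<le> ereal (c a y' - c x' y')"
  unfolding rockafellar_potential_def
proof (rule SUP_least)
  fix y
  have "rockafellar_dual c G a b y \<le> ereal (c a y' - c x' y' + c x' y)"
    unfolding rockafellar_dual_def by (rule SUP_least) (auto intro: chain_cost_le[OF _ assms])
  then show "rockafellar_dual c G a b y - ereal (c x' y) \<le> ereal (c a y' - c x' y')"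
    by (cases "rockafellar_dual c G a b y") auto
qed

lemma rockafellar_potential_anchor: "rockafellar_potential c G a b a = 0"
  using rockafellar_potential_ge[of a] rockafellar_potential_le[OF anchor]
  by (simp add: zero_ereal_def antisym)

lemma rockafellar_dual_extend:
  assumes "(x', y') \<in> G"
  shows "rockafellar_dual c G a b y - ereal (c x' y) \<le> rockafellar_dual c G a b y' - ereal (c x' y')"
proof -
  have "rockafellar_dual c G a b y \<le> rockafellar_dual c G a b y' - ereal (c x' y') + ereal (c x' y)"
    unfolding rockafellar_dual_def[of c G a b y]
  proof (rule SUP_least, clarify)
    fix n xs ys assume chain: "(n, xs, ys) \<in> chains_from G a b y"
    then have "(Suc n, xs(Suc n := x'), ys(Suc n := y')) \<in> chains_from G a b y'"
      using assms by (auto simp: chains_from_def le_Suc_eq)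
    moreover have "chain_cost c (Suc n) (xs(Suc n := x')) (ys(Suc n := y')) =
        chain_cost c n xs ys - c x' y + c x' y'"
      using chain by (simp add: chain_cost_def chains_from_def)
    ultimately have "ereal (chain_cost c n xs ys - c x' y + c x' y') \<le> rockafellar_dual c G a b y'"
      by (metis rockafellar_dual_ge)
    then show "ereal (chain_cost c n xs ys) \<le> rockafellar_dual c G a b y' - ereal (c x' y') + ereal (c x' y)"
      by (cases "rockafellar_dual c G a b y'") auto
  qed
  then show ?thesis
    by (cases "rockafellar_dual c G a b y'"; cases "rockafellar_dual c G a b y") auto
qed

lemma rockafellar_potential_c_convex: "c_convex c (rockafellar_potential c G a b)"
  unfolding c_convex_def
proof (intro conjI exI allI)
  show "rockafellar_potential c G a b x \<noteq> - \<infinity>" for x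
    using rockafellar_potential_ge[of x] by auto
  show "rockafellar_potential c G a b a \<noteq> \<infinity>"
    using rockafellar_potential_anchor by simp
qed (simp add: rockafellar_potential_def)

lemma c_subdiff_rockafellar_potential: "G \<subseteq> c_subdiff c (rockafellar_potential c G a b)"
proof clarify
  fix x' y' assume xy': "(x', y') \<in> G"
  let ?\<psi> = "rockafellar_potential c G a b"
  obtain r where r: "?\<psi> x' = ereal r"
    using rockafellar_potential_ge[of x'] rockafellar_potential_le[OF xy'] by (cases "?\<psi> x'") auto
  have dual: "?\<psi> x' \<le> rockafellar_dual c G a b y' - ereal (c x' y')"
    unfolding rockafellar_potential_def by (rule SUP_least) (rule rockafellar_dual_extend[OF xy'])
  have "c_transform c ?\<psi> y' = ?\<psi> x' + ereal (c x' y')"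
  proof (rule antisym)
    show "c_transform c ?\<psi> y' \<le> ?\<psi> x' + ereal (c x' y')"
      unfolding c_transform_def by (rule INF_lower) simp
    show "?\<psi> x' + ereal (c x' y') \<le> c_transform c ?\<psi> y'"
      unfolding c_transform_def
    proof (rule INF_greatest)
      fix x
      have "rockafellar_dual c G a b y' - ereal (c x y') \<le> ?\<psi> x"
        unfolding rockafellar_potential_def by (rule SUP_upper) simp
      with dual show "?\<psi> x' + ereal (c x' y') \<le> ?\<psi> x + ereal (c x y')"
        by (cases "rockafellar_dual c G a b y'"; cases "?\<psi> x") (auto simp: r)
    qed
  qed
  then show "(x', y') \<in> c_subdiff c ?\<psi>"
    by (simp add: c_subdiff_def r)
qed

end

lemma (in sigma_finite_measure) nn_integral_pair_measure_times:
  assumes "f \<in> borel_measurable N" and "g \<in> borel_measurable M"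
  shows "(\<integral>\<^sup>+z. f (fst z) * g (snd z) \<partial>(N \<Otimes>\<^sub>M M)) = (\<integral>\<^sup>+x. f x \<partial>N) * (\<integral>\<^sup>+y. g y \<partial>M)"
proof -
  have "(\<integral>\<^sup>+z. f (fst z) * g (snd z) \<partial>(N \<Otimes>\<^sub>M M)) = (\<integral>\<^sup>+x. \<integral>\<^sup>+y. f x * g y \<partial>M \<partial>N)"
    using nn_integral_fst[symmetric, of "\<lambda>z. f (fst z) * g (snd z)" N] assms by simp
  also have "\<dots> = (\<integral>\<^sup>+x. f x \<partial>N) * (\<integral>\<^sup>+y. g y \<partial>M)"
    using assms by (simp add: nn_integral_cmult nn_integral_multc)
  finally show ?thesis .
qed

lemma (in sigma_finite_measure) product_density_rectangle_bounds:
  fixes A :: "'b \<Rightarrow> ennreal" and B :: "'a \<Rightarrow> ennreal" and w :: "'b \<Rightarrow> 'a \<Rightarrow> ennreal"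
  assumes [measurable]: "A \<in> borel_measurable N" "B \<in> borel_measurable M"
    "(\<lambda>z. w (fst z) (snd z)) \<in> borel_measurable (N \<Otimes>\<^sub>M M)"
    and [measurable]: "S \<in> sets N" "T \<in> sets M"
    and w_bounds: "\<And>u v. u \<in> S \<Longrightarrow> v \<in> T \<Longrightarrow> lo \<le> w u v \<and> w u v \<le> hi"
  defines "P \<equiv> density (N \<Otimes>\<^sub>M M) (\<lambda>z. A (fst z) * B (snd z) * w (fst z) (snd z))"
  shows "lo * ((\<integral>\<^sup>+u\<in>S. A u \<partial>N) * (\<integral>\<^sup>+v\<in>T. B v \<partial>M)) \<le> emeasure P (S \<times> T)"
    and "emeasure P (S \<times> T) \<le> hi * ((\<integral>\<^sup>+u\<in>S. A u \<partial>N) * (\<integral>\<^sup>+v\<in>T. B v \<partial>M))"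
proof -
  let ?AB = "\<lambda>z. (A (fst z) * indicator S (fst z)) * (B (snd z) * indicator T (snd z))"
  have AB: "(\<integral>\<^sup>+z. ?AB z \<partial>(N \<Otimes>\<^sub>M M)) = (\<integral>\<^sup>+u\<in>S. A u \<partial>N) * (\<integral>\<^sup>+v\<in>T. B v \<partial>M)"
    by (rule nn_integral_pair_measure_times) measurable
  have P: "emeasure P (S \<times> T) = (\<integral>\<^sup>+z. (A (fst z) * B (snd z) * w (fst z) (snd z)) * indicator (S \<times> T) z \<partial>(N \<Otimes>\<^sub>M M))"
    unfolding P_def by (rule emeasure_density) measurable
  have "lo * ?AB z \<le> (A (fst z) * B (snd z) * w (fst z) (snd z)) * indicator (S \<times> T) z"
    and "(A (fst z) * B (snd z) * w (fst z) (snd z)) * indicator (S \<times> T) z \<le> hi * ?AB z" for z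
  proof (atomize (full), cases "z \<in> S \<times> T")
    case True
    then have "lo * (A (fst z) * B (snd z)) \<le> w (fst z) (snd z) * (A (fst z) * B (snd z))"
      and "w (fst z) (snd z) * (A (fst z) * B (snd z)) \<le> hi * (A (fst z) * B (snd z))"
      using w_bounds[of "fst z" "snd z"] by (auto intro!: mult_right_mono)
    with True show "lo * ?AB z \<le> (A (fst z) * B (snd z) * w (fst z) (snd z)) * indicator (S \<times> T) z \<and>
        (A (fst z) * B (snd z) * w (fst z) (snd z)) * indicator (S \<times> T) z \<le> hi * ?AB z"
      by (auto simp: mult_ac)
  qed (auto simp: indicator_def mem_Times_iff)
  then show "lo * ((\<integral>\<^sup>+u\<in>S. A u \<partial>N) * (\<integral>\<^sup>+v\<in>T. B v \<partial>M)) \<le> emeasure P (S \<times> T)"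
    and "emeasure P (S \<times> T) \<le> hi * ((\<integral>\<^sup>+u\<in>S. A u \<partial>N) * (\<integral>\<^sup>+v\<in>T. B v \<partial>M))"
    unfolding P AB[symmetric] by (auto simp: nn_integral_cmult[symmetric] intro!: nn_integral_mono)
qed

lemma eventually_ball_times_ball_subset:
  fixes x :: "'a::metric_space" and y :: "'b::metric_space"
  assumes "open V" and "(x, y) \<in> V"
  shows "\<forall>\<^sub>F r in at_right 0. ball x r \<times> ball y r \<subseteq> V"
proof -
  obtain A B where "open A" "open B" "(x, y) \<in> A \<times> B" and AB: "A \<times> B \<subseteq> V"
    by (rule open_prod_elim[OF assms])
  then obtain d e where "d > 0" "ball x d \<subseteq> A" "e > 0" "ball y e \<subseteq> B"
    by (auto dest!: open_contains_ball_eq[THEN iffD1])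
  then have "\<forall>\<^sub>F r in at_right 0. ball x r \<subseteq> A \<and> ball y r \<subseteq> B"
    using order_tendstoD(2)[OF tendsto_ident_at, of 0 "min d e" "{0<..}"]
    by (auto elim!: eventually_mono)
  then show ?thesis
    by eventually_elim (use AB in blast)
qed

lemma closed_msupport: "closed (msupport M)"
proof -
  have "- msupport M = \<Union>{U. open U \<and> emeasure M U = 0}"
    by (auto simp: msupport_def not_gr_zero)
  then show ?thesis
    unfolding closed_def by auto
qed

lemma emeasure_compl_msupport:
  fixes M :: "'a::second_countable_topology measure"
  assumes "sets M = sets borel"
  shows "emeasure M (- msupport M) = 0"
proof -
  obtain \<U> where \<U>: "\<U> \<subseteq> {U. open U \<and> emeasure M U = 0}" "countable \<U>"
    and "\<Union>\<U> = \<Union>{U. open U \<and> emeasure M U = 0}"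
    using Lindelof[of "{U. open U \<and> emeasure M U = 0}"] by auto
  then have "- msupport M = (\<Union>U\<in>\<U>. U)"
    by (auto simp: msupport_def not_gr_zero)
  also have "\<dots> \<in> null_sets M"
    using \<U> by (intro null_sets_UN') (auto simp: null_sets_def assms intro: borel_open)
  finally show ?thesis by auto
qed

lemma compact_subset_measure_compl_less:
  fixes M :: "'a::{second_countable_topology, complete_space} measure"
  assumes "prob_space M" and sets_M: "sets M = sets borel"
    and "S \<in> sets borel" "emeasure M (- S) = 0" "e > 0"
  shows "\<exists>K. compact K \<and> K \<subseteq> S \<and> measure M (- K) < e"
proof -
  interpret prob_space M by fact
  have space_M: "space M = UNIV"
    using sets_eq_imp_space_eq[OF sets_M] by simp
  have "measure M S = 1"
    using assms(3,4) sets_M space_M prob_compl[of S] prob_space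
    by (simp add: emeasure_eq_measure Compl_eq_Diff_UNIV)
  then have "ennreal (1 - e) < emeasure M S"
    using \<open>e > 0\<close> by (simp add: emeasure_eq_measure ennreal_lessI)
  also have "emeasure M S = (SUP K \<in> {K. K \<subseteq> S \<and> compact K}. emeasure M K)"
    using assms(3) sets_M by (intro inner_regular) auto
  finally obtain K where K: "compact K" "K \<subseteq> S" "ennreal (1 - e) < emeasure M K"
    by (auto simp: less_SUP_iff)
  then have "K \<in> sets M"
    using sets_M by (simp add: borel_compact)
  have "1 - e < measure M K"
    using K(3) by (cases "e \<le> 1") (auto simp: emeasure_eq_measure ennreal_less_iff not_le
        intro: less_le_trans[OF _ measure_nonneg])
  moreover have "measure M (- K) = 1 - measure M K"
    using prob_compl[OF \<open>K \<in> sets M\<close>] space_M by (simp add: Compl_eq_Diff_UNIV)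
  ultimately show ?thesis
    using K(1,2) by (intro exI[of _ K]) simp
qed

lemma sigma_compact_subset_full_measure:
  fixes M :: "'a::{second_countable_topology, complete_space} measure"
  assumes "prob_space M" and sets_M: "sets M = sets borel"
    and "S \<in> sets borel" and "emeasure M (- S) = 0"
  shows "\<exists>K :: nat \<Rightarrow> 'a set. (\<forall>n. compact (K n)) \<and> (\<Union>n. K n) \<subseteq> S \<and> emeasure M (- (\<Union>n. K n)) = 0"
proof -
  interpret prob_space M by fact
  have "\<exists>K. compact K \<and> K \<subseteq> S \<and> measure M (- K) < 1 / Suc n" for n
    by (rule compact_subset_measure_compl_less[OF assms]) simp
  then obtain K where K: "\<And>n. compact (K n)" "\<And>n. K n \<subseteq> S" "\<And>n. measure M (- K n) < 1 / Suc n"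
    by (metis choice)
  have "measure M (- (\<Union>n. K n)) < 1 / Suc n" for n
  proof -
    have "- K n \<in> sets M"
      using K(1) sets_M by (simp add: borel_comp borel_compact)
    then have "measure M (- (\<Union>n. K n)) \<le> measure M (- K n)"
      by (intro finite_measure_mono) auto
    with K(3)[of n] show ?thesis by simp
  qed
  then have "measure M (- (\<Union>n. K n)) \<le> 0"
    by (metis nat_approx_posE not_le order.asym)
  then have "emeasure M (- (\<Union>n. K n)) = 0"
    unfolding emeasure_eq_measure using antisym[OF _ measure_nonneg] by simp
  with K show ?thesis by blast
qed

lemma continuous_image_full_measure:
  fixes P :: "'a::{second_countable_topology, complete_space} measure"
    and f :: "'a \<Rightarrow> 'b::{second_countable_topology, t2_space}"
  assumes "prob_space P" "sets P = sets borel" "sets M = sets borel"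
    and "continuous_on UNIV f" "distr P M f = M"
    and "S \<in> sets borel" "emeasure P (- S) = 0"
  shows "\<exists>F \<in> sets borel. F \<subseteq> f ` S \<and> emeasure M (- F) = 0"
proof -
  obtain K :: "nat \<Rightarrow> 'a set" where K: "\<forall>n. compact (K n)" "(\<Union>n. K n) \<subseteq> S"
    "emeasure P (- (\<Union>n. K n)) = 0"
    using sigma_compact_subset_full_measure[OF assms(1,2,6,7)] by (elim exE conjE)
  define F where "F = (\<Union>n. f ` K n)"
  have "compact (f ` K n)" for n
    using K(1) assms(4) compact_continuous_image continuous_on_subset by blast
  then have "F \<in> sets borel"
    unfolding F_def by (auto intro: borel_compact)
  have "f \<in> measurable P M"
    using borel_measurable_continuous_onI[OF assms(4)] measurable_cong_sets[OF assms(2,3)] by simp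
  then have "emeasure M (- F) = emeasure P (f -` (- F) \<inter> space P)"
    using emeasure_distr[of f P M "- F"] assms(3,5) \<open>F \<in> sets borel\<close> by (simp add: borel_comp)
  also have "\<dots> \<le> emeasure P (- (\<Union>n. K n))"
  proof (rule emeasure_mono)
    show "f -` (- F) \<inter> space P \<subseteq> - (\<Union>n. K n)"
      by (auto simp: F_def)
    have "K n \<in> sets borel" for n
      using K(1) by (simp add: borel_compact)
    then show "- (\<Union>n. K n) \<in> sets P"
      unfolding assms(2) by (intro borel_comp) auto
  qed
  finally have "emeasure M (- F) = 0"
    using K(3) by simp
  moreover have "F \<subseteq> f ` S"
    using K(2) by (auto simp: F_def)
  ultimately show ?thesis
    using \<open>F \<in> sets borel\<close> by blast
qed

lemma (in sigma_finite_measure) compl_Times_in_null_sets: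
  assumes "space N = UNIV" "space M = UNIV" "F \<in> sets N" "G \<in> sets M"
    and "emeasure N (- F) = 0" "emeasure M (- G) = 0"
  shows "- (F \<times> G) \<in> null_sets (N \<Otimes>\<^sub>M M)"
proof -
  have "- F \<in> null_sets N" "- G \<in> null_sets M"
    using assms sets.compl_sets[of F N] sets.compl_sets[of G M] by (simp_all add: null_sets_def Compl_eq_Diff_UNIV)
  moreover have "UNIV \<in> sets N" "UNIV \<in> sets M"
    using sets.top[of N] sets.top[of M] assms(1,2) by simp_all
  ultimately have "(- F) \<times> UNIV \<union> UNIV \<times> (- G) \<in> null_sets (N \<Otimes>\<^sub>M M)"
    by (intro null_sets.Un times_in_null_sets1 times_in_null_sets2)
  moreover have "- (F \<times> G) \<in> sets (N \<Otimes>\<^sub>M M)"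
    using sets.compl_sets[of "F \<times> G" "N \<Otimes>\<^sub>M M"] assms
    by (simp add: space_pair_measure Compl_eq_Diff_UNIV)
  ultimately show ?thesis
    by (rule null_sets_subset) auto
qed

lemma integrable_bounded_continuous:
  fixes g :: "'a::topological_space \<Rightarrow> real"
  assumes "finite_measure M" "sets M = sets borel" "continuous_on UNIV g" "\<And>x. \<bar>g x\<bar> \<le> B"
  shows "integrable M g"
proof -
  interpret finite_measure M by fact
  have "g \<in> borel_measurable M"
    using borel_measurable_continuous_onI[OF assms(3)] measurable_cong_sets[OF assms(2) refl] by blast
  then show ?thesis
    using assms(4) by (intro integrable_const_bound[where B=B]) auto
qed

lemma weak_conv_measure_ball_lower_bound:
  fixes P :: "'i \<Rightarrow> 'a::metric_space measure" and P0 :: "'a measure"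
  assumes weak_conv: "weak_conv_filter P P0 F"
    and prob_P: "\<forall>\<^sub>F i in F. prob_space (P i) \<and> sets (P i) = sets borel"
    and "prob_space P0" "sets P0 = sets borel"
    and "z \<in> msupport P0" "\<rho> > 0"
  obtains L where "L > 0" "\<forall>\<^sub>F i in F. L \<le> measure (P i) (ball z \<rho>)"
proof -
  define g where "g w = max 0 (1 - dist w z / \<rho>)" for w
  have g_cont: "continuous_on UNIV g"
    unfolding g_def using \<open>\<rho> > 0\<close> by (intro continuous_intros) auto
  have g_range: "0 \<le> g w \<and> g w \<le> 1" for w
    unfolding g_def using \<open>\<rho> > 0\<close> by auto
  have g_int: "integrable M g" if "prob_space M" "sets M = sets borel" for M :: "'a measure"
    using that g_range
    by (intro integrable_bounded_continuous[OF prob_space.finite_measure _ g_cont, where B=1]) auto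
  have lim: "((\<lambda>i. integral\<^sup>L (P i) g) \<longlongrightarrow> integral\<^sup>L P0 g) F"
  proof -
    have "bounded (range g)"
      unfolding bounded_iff using g_range by (intro exI[of _ 1]) auto
    then show ?thesis
      using weak_conv g_cont unfolding weak_conv_filter_def by blast
  qed
  interpret P0: prob_space P0 by fact
  have "0 < measure P0 (ball z (\<rho> / 2))"
    using assms(5,6) by (simp add: msupport_def P0.emeasure_eq_measure)
  also have "\<dots> = 2 * (\<integral>w. 1 / 2 * indicator (ball z (\<rho> / 2)) w \<partial>P0)"
    using assms(4) by (simp add: P0.emeasure_eq_measure)
  also have "(\<integral>w. 1 / 2 * indicator (ball z (\<rho> / 2)) w \<partial>P0) \<le> integral\<^sup>L P0 g"
    using assms(4) g_range \<open>\<rho> > 0\<close>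
    by (intro integral_mono g_int[OF assms(3,4)] integrable_mult_right integrable_real_indicator)
       (auto simp: g_def indicator_def dist_commute P0.emeasure_eq_measure)
  finally have g_pos: "0 < integral\<^sup>L P0 g"
    by simp
  have "\<forall>\<^sub>F i in F. integral\<^sup>L P0 g / 2 < integral\<^sup>L (P i) g"
    using g_pos by (intro order_tendstoD(1)[OF lim]) simp
  with prob_P have "\<forall>\<^sub>F i in F. integral\<^sup>L P0 g / 2 \<le> measure (P i) (ball z \<rho>)"
  proof eventually_elim
    case (elim i)
    then interpret prob_space "P i" by simp
    have "integral\<^sup>L (P i) g \<le> integral\<^sup>L (P i) (indicator (ball z \<rho>))"
      using elim g_range \<open>\<rho> > 0\<close>
      by (intro integral_mono g_int integrable_real_indicator)
         (auto simp: g_def indicator_def dist_commute emeasure_eq_measure)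
    with elim show ?case by simp
  qed
  with g_pos that show ?thesis
    by (metis half_gt_zero)
qed

lemma (in prob_space) prod_prob_le_factor:
  assumes "finite I" "j \<in> I"
  shows "(\<Prod>i\<in>I. prob (A i)) \<le> prob (A j)"
proof -
  have "(\<Prod>i\<in>I. prob (A i)) = prob (A j) * (\<Prod>i\<in>I - {j}. prob (A i))"
    using prod.remove[OF assms] .
  also have "\<dots> \<le> prob (A j) * 1"
    by (intro mult_left_mono prod_le_1) auto
  finally show ?thesis by simp
qed

lemma ereal_mult_eln_ge:
  assumes "\<epsilon> > 0" "a > 0" "ennreal a \<le> m" "m \<noteq> \<top>"
  shows "ereal (\<epsilon> * ln a) \<le> ereal \<epsilon> * eln m"
proof -
  have "m = ennreal (enn2real m)" "m \<noteq> 0"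
    using assms by (auto simp: less_top)
  moreover have "a \<le> enn2real m"
    using enn2real_mono[OF assms(3)] assms by (simp add: less_top)
  ultimately show ?thesis
    using assms by (simp add: eln_def)
qed

lemma Liminf_scaled_eln_ge:
  fixes m :: "real \<Rightarrow> ennreal"
  assumes "L > 0" and bound: "\<forall>\<^sub>F \<epsilon> in at_right 0. ennreal (L * exp (t / \<epsilon>)) \<le> m \<epsilon> \<and> m \<epsilon> \<noteq> \<top>"
  shows "ereal t \<le> Liminf (at_right 0) (\<lambda>\<epsilon>. ereal \<epsilon> * eln (m \<epsilon>))"
  unfolding le_Liminf_iff
proof (intro allI impI)
  fix y assume "y < ereal t"
  then obtain s where "y < ereal s" "s < t"
    by (metis ereal_dense2 less_ereal.simps(1))
  have "((\<lambda>\<epsilon>. \<epsilon> * ln L) \<longlongrightarrow> 0) (at_right 0)"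
    by (auto intro!: tendsto_eq_intros)
  then have "\<forall>\<^sub>F \<epsilon> in at_right 0. s - t < \<epsilon> * ln L"
    using \<open>s < t\<close> by (intro order_tendstoD(1)) auto
  with bound eventually_at_right_less
  show "\<forall>\<^sub>F \<epsilon> in at_right 0. y < ereal \<epsilon> * eln (m \<epsilon>)"
  proof eventually_elim
    case (elim \<epsilon>)
    then have "ereal (\<epsilon> * ln (L * exp (t / \<epsilon>))) \<le> ereal \<epsilon> * eln (m \<epsilon>)"
      using \<open>L > 0\<close> by (intro ereal_mult_eln_ge) auto
    moreover have "\<epsilon> * ln (L * exp (t / \<epsilon>)) = \<epsilon> * ln L + t"
      using \<open>L > 0\<close> elim by (simp add: ln_mult distrib_left)
    ultimately have "ereal s < ereal \<epsilon> * eln (m \<epsilon>)"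
      using elim by (metis add.commute diff_less_eq less_ereal.simps(1) order_less_le_trans)
    with \<open>y < ereal s\<close> show ?case
      by (rule less_trans)
  qed
qed

lemma eventually_exp_divide_at_right_gt_1:
  fixes L t :: real
  assumes "L > 0" "t > 0"
  shows "\<forall>\<^sub>F \<epsilon> in at_right 0. 1 < L * exp (t / \<epsilon>)"
proof -
  have "filterlim (\<lambda>\<epsilon>. L * exp (t * inverse \<epsilon>)) at_top (at_right 0)"
    by (intro filterlim_tendsto_pos_mult_at_top[OF tendsto_const \<open>L > 0\<close>]
        filterlim_compose[OF exp_at_top] filterlim_tendsto_pos_mult_at_top[OF tendsto_const \<open>t > 0\<close>]
        filterlim_inverse_at_top_right)
  then show ?thesis
    by (simp add: filterlim_at_top_dense divide_inverse)
qed

lemma two_cycle_exchange: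
  fixes f :: "'a \<times> 'b \<Rightarrow> real" and c :: "'a \<Rightarrow> 'b \<Rightarrow> real"
  assumes cyclic: "\<forall>(k::nat) (x::nat \<Rightarrow> 'a) (y::nat \<Rightarrow> 'b). k \<ge> 1 \<longrightarrow>
           (\<Prod>i<k. f (x i, y i)) =
             exp (- (1 / \<epsilon>) * ((\<Sum>i<k. c (x i) (y i)) - (\<Sum>i<k. c (x i) (y ((i + 1) mod k)))))
             * (\<Prod>i<k. f (x i, y ((i + 1) mod k)))"
  defines "g \<equiv> \<lambda>z. f z * exp (c (fst z) (snd z) / \<epsilon>)"
  shows "g (x, y) * g (x', y') = g (x, y') * g (x', y)"
proof -
  have "g (x, y) * g (x', y') = (f (x, y) * f (x', y')) * exp ((c x y + c x' y') / \<epsilon>)"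
    by (simp add: g_def add_divide_distrib exp_add mult_ac)
  also have "f (x, y) * f (x', y') =
      exp (- ((c x y + c x' y' - (c x y' + c x' y)) / \<epsilon>)) * (f (x, y') * f (x', y))"
    using cyclic[rule_format, of 2 "\<lambda>i. if i = 0 then x else x'" "\<lambda>i. if i = 0 then y else y'"]
    by (simp add: eval_nat_numeral mult_ac)
  also have "\<dots> * exp ((c x y + c x' y') / \<epsilon>) = (f (x, y') * f (x', y)) * exp ((c x y' + c x' y) / \<epsilon>)"
    by (simp add: mult_ac exp_add[symmetric] diff_divide_distrib)
  also have "\<dots> = g (x, y') * g (x', y)"
    by (simp add: g_def add_divide_distrib exp_add mult_ac)
  finally show ?thesis .
qed

locale cyclically_invariant_family =
  fixes \<mu> :: "'a::polish_space measure" and \<nu> :: "'b::polish_space measure"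
    and c :: "'a \<Rightarrow> 'b \<Rightarrow> real" and \<pi> :: "real \<Rightarrow> ('a \<times> 'b) measure"
  assumes prob_\<mu>: "prob_space \<mu>" and sets_\<mu>: "sets \<mu> = sets borel"
    and prob_\<nu>: "prob_space \<nu>" and sets_\<nu>: "sets \<nu> = sets borel"
    and continuous_c: "continuous_on UNIV (\<lambda>(x, y). c x y)"
    and cyclically_invariant: "\<And>\<epsilon>. \<epsilon> > 0 \<Longrightarrow> cyc_inv_coupling c \<epsilon> \<mu> \<nu> (\<pi> \<epsilon>)"
begin

lemma sets_pair_measure_borel: "sets (\<mu> \<Otimes>\<^sub>M \<nu>) = sets (borel :: ('a \<times> 'b) measure)"
  using sets_pair_measure_cong[OF sets_\<mu> sets_\<nu>] borel_prod by metis

lemma space_\<mu>: "space \<mu> = UNIV"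
  and space_\<nu>: "space \<nu> = UNIV"
  using sets_eq_imp_space_eq[OF sets_\<mu>] sets_eq_imp_space_eq[OF sets_\<nu>] by simp_all

lemma continuous_on_cost: "continuous_on UNIV (\<lambda>z. c (fst z) (snd z))"
  using continuous_c by (simp add: case_prod_beta')

lemma measurable_cost: "(\<lambda>z. c (fst z) (snd z)) \<in> borel_measurable (\<mu> \<Otimes>\<^sub>M \<nu>)"
proof -
  have "(\<lambda>(x, y). c x y) \<in> borel_measurable borel"
    by (rule borel_measurable_continuous_onI[OF continuous_c])
  then show ?thesis
    unfolding measurable_cong_sets[OF sets_pair_measure_borel refl] by (simp add: case_prod_beta')
qed

lemma prob_space_\<pi>: "\<epsilon> > 0 \<Longrightarrow> prob_space (\<pi> \<epsilon>)"
  and sets_\<pi>: "\<epsilon> > 0 \<Longrightarrow> sets (\<pi> \<epsilon>) = sets borel"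
  using cyclically_invariant sets_pair_measure_borel
  by (auto simp: cyc_inv_coupling_def coupling_def)

lemma null_sets_subset_\<pi>: "\<epsilon> > 0 \<Longrightarrow> null_sets (\<mu> \<Otimes>\<^sub>M \<nu>) \<subseteq> null_sets (\<pi> \<epsilon>)"
  using cyclically_invariant by (auto simp: cyc_inv_coupling_def absolutely_continuous_def)

lemma eventually_prob_space_\<pi>:
  "\<forall>\<^sub>F \<epsilon> in at_right 0. prob_space (\<pi> \<epsilon>) \<and> sets (\<pi> \<epsilon>) = sets borel"
  using eventually_at_right_less by eventually_elim (use prob_space_\<pi> sets_\<pi> in auto)

lemma density_factorization:
  assumes "\<epsilon> > 0"
  obtains A :: "'a \<Rightarrow> ennreal" and B :: "'b \<Rightarrow> ennreal"
  where "A \<in> borel_measurable \<mu>" "B \<in> borel_measurable \<nu>"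
    and "\<pi> \<epsilon> = density (\<mu> \<Otimes>\<^sub>M \<nu>) (\<lambda>z. A (fst z) * B (snd z) * ennreal (exp (- c (fst z) (snd z) / \<epsilon>)))"
proof -
  obtain f :: "'a \<times> 'b \<Rightarrow> real" where f_meas: "f \<in> borel_measurable (\<mu> \<Otimes>\<^sub>M \<nu>)"
    and f_pos: "\<forall>z. 0 < f z" and \<pi>_eq: "\<pi> \<epsilon> = density (\<mu> \<Otimes>\<^sub>M \<nu>) (\<lambda>z. ennreal (f z))"
    and cyclic: "\<forall>(k::nat) (x::nat \<Rightarrow> 'a) (y::nat \<Rightarrow> 'b). k \<ge> 1 \<longrightarrow>
           (\<Prod>i<k. f (x i, y i)) =
             exp (- (1 / \<epsilon>) * ((\<Sum>i<k. c (x i) (y i)) - (\<Sum>i<k. c (x i) (y ((i + 1) mod k)))))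
             * (\<Prod>i<k. f (x i, y ((i + 1) mod k)))"
    using cyclically_invariant[OF assms] unfolding cyc_inv_coupling_def by blast
  define g where "g z = f z * exp (c (fst z) (snd z) / \<epsilon>)" for z
  define x0 :: 'a where "x0 = undefined"
  define y0 :: 'b where "y0 = undefined"
  have g_pos: "0 < g z" for z
    using f_pos[rule_format, of z] by (simp add: g_def)
  have f_eq: "f z = g (fst z, y0) * (g (x0, snd z) / g (x0, y0)) * exp (- c (fst z) (snd z) / \<epsilon>)" for z
  proof -
    have "g z * g (x0, y0) = g (fst z, y0) * g (x0, snd z)"
      using two_cycle_exchange[OF cyclic, of "fst z" "snd z" x0 y0] by (simp add: g_def)
    then have "g z = g (fst z, y0) * (g (x0, snd z) / g (x0, y0))"
      using g_pos[of "(x0, y0)"] by (simp add: field_simps)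
    moreover have "f z = g z * exp (- c (fst z) (snd z) / \<epsilon>)"
      by (simp add: g_def mult.assoc exp_add[symmetric])
    ultimately show ?thesis
      by simp
  qed
  have g_meas: "g \<in> borel_measurable (\<mu> \<Otimes>\<^sub>M \<nu>)"
    unfolding g_def using f_meas measurable_cost by measurable
  have "x0 \<in> space \<mu>" "y0 \<in> space \<nu>"
    by (simp_all add: space_\<mu> space_\<nu>)
  then have [measurable]: "(\<lambda>x. g (x, y0)) \<in> borel_measurable \<mu>" "(\<lambda>y. g (x0, y)) \<in> borel_measurable \<nu>"
    using measurable_compose[OF measurable_Pair2' g_meas] measurable_compose[OF measurable_Pair1' g_meas]
    by auto
  have "ennreal (f z) = ennreal (g (fst z, y0)) * ennreal (g (x0, snd z) / g (x0, y0)) *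
      ennreal (exp (- c (fst z) (snd z) / \<epsilon>))" for z
    using g_pos[of "(fst z, y0)"] g_pos[of "(x0, snd z)"] g_pos[of "(x0, y0)"]
    by (simp only: f_eq[of z] ennreal_mult' mult_nonneg_nonneg less_imp_le divide_nonneg_pos)
  then show thesis
    by (intro that[of "\<lambda>x. ennreal (g (x, y0))" "\<lambda>y. ennreal (g (x0, y) / g (x0, y0))"]) (auto simp: \<pi>_eq)
qed

lemma rectangle_mass_bounds:
  assumes "\<epsilon> > 0"
  obtains a :: "'a set \<Rightarrow> ennreal" and b :: "'b set \<Rightarrow> ennreal"
  where "\<And>S T c0 \<delta>. S \<in> sets borel \<Longrightarrow> T \<in> sets borel \<Longrightarrow>
      (\<And>u v. u \<in> S \<Longrightarrow> v \<in> T \<Longrightarrow> \<bar>c u v - c0\<bar> \<le> \<delta>) \<Longrightarrow>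
      ennreal (exp (- (c0 + \<delta>) / \<epsilon>)) * (a S * b T) \<le> emeasure (\<pi> \<epsilon>) (S \<times> T) \<and>
      emeasure (\<pi> \<epsilon>) (S \<times> T) \<le> ennreal (exp (- (c0 - \<delta>) / \<epsilon>)) * (a S * b T)"
proof -
  obtain A B where [measurable]: "A \<in> borel_measurable \<mu>" "B \<in> borel_measurable \<nu>"
    and \<pi>_eq: "\<pi> \<epsilon> = density (\<mu> \<Otimes>\<^sub>M \<nu>) (\<lambda>z. A (fst z) * B (snd z) * ennreal (exp (- c (fst z) (snd z) / \<epsilon>)))"
    using density_factorization[OF assms] by blast
  interpret \<nu>: prob_space \<nu> by (rule prob_\<nu>)
  have measurable_w: "(\<lambda>z. ennreal (exp (- c (fst z) (snd z) / \<epsilon>))) \<in> borel_measurable (\<mu> \<Otimes>\<^sub>M \<nu>)"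
    using measurable_cost by measurable
  show thesis
  proof (rule that[of "\<lambda>S. \<integral>\<^sup>+u\<in>S. A u \<partial>\<mu>" "\<lambda>T. \<integral>\<^sup>+v\<in>T. B v \<partial>\<nu>"])
    fix S T c0 \<delta>
    assume "S \<in> sets borel" "T \<in> sets borel" and close: "\<And>u v. u \<in> S \<Longrightarrow> v \<in> T \<Longrightarrow> \<bar>c u v - c0\<bar> \<le> \<delta>"
    then have sets: "S \<in> sets \<mu>" "T \<in> sets \<nu>"
      using sets_\<mu> sets_\<nu> by auto
    have "ennreal (exp (- (c0 + \<delta>) / \<epsilon>)) \<le> ennreal (exp (- c u v / \<epsilon>)) \<and>
        ennreal (exp (- c u v / \<epsilon>)) \<le> ennreal (exp (- (c0 - \<delta>) / \<epsilon>))"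
      if "u \<in> S" "v \<in> T" for u v
      using close[OF that] \<open>\<epsilon> > 0\<close> unfolding abs_le_iff
      by (intro conjI ennreal_leI exp_mono divide_right_mono) auto
    from \<nu>.product_density_rectangle_bounds[OF _ _ measurable_w sets this]
    show "ennreal (exp (- (c0 + \<delta>) / \<epsilon>)) * ((\<integral>\<^sup>+u\<in>S. A u \<partial>\<mu>) * (\<integral>\<^sup>+v\<in>T. B v \<partial>\<nu>)) \<le> emeasure (\<pi> \<epsilon>) (S \<times> T) \<and>
        emeasure (\<pi> \<epsilon>) (S \<times> T) \<le> ennreal (exp (- (c0 - \<delta>) / \<epsilon>)) * ((\<integral>\<^sup>+u\<in>S. A u \<partial>\<mu>) * (\<integral>\<^sup>+v\<in>T. B v \<partial>\<nu>))"
      unfolding \<pi>_eq by simp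
  qed
qed

lemma product_inequality:
  fixes k :: nat and \<delta> \<epsilon> :: real
  assumes "\<epsilon> > 0" and \<sigma>: "\<sigma> permutes {..<k}"
    and "\<And>j. S j \<in> sets borel" "\<And>j. T j \<in> sets borel"
    and close: "\<And>i j u v. i < k \<Longrightarrow> j < k \<Longrightarrow> u \<in> S i \<Longrightarrow> v \<in> T j \<Longrightarrow> \<bar>c u v - c (X i) (Y j)\<bar> \<le> \<delta>"
  shows "(\<Prod>j<k. measure (\<pi> \<epsilon>) (S j \<times> T j)) \<le>
    exp ((2 * real k * \<delta> - ((\<Sum>j<k. c (X j) (Y j)) - (\<Sum>j<k. c (X j) (Y (\<sigma> j))))) / \<epsilon>) *
    (\<Prod>j<k. measure (\<pi> \<epsilon>) (S j \<times> T (\<sigma> j)))"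
proof -
  obtain a b where bounds: "\<And>S T c0 \<delta>. S \<in> sets borel \<Longrightarrow> T \<in> sets borel \<Longrightarrow>
      (\<And>u v. u \<in> S \<Longrightarrow> v \<in> T \<Longrightarrow> \<bar>c u v - c0\<bar> \<le> \<delta>) \<Longrightarrow>
      ennreal (exp (- (c0 + \<delta>) / \<epsilon>)) * (a S * b T) \<le> emeasure (\<pi> \<epsilon>) (S \<times> T) \<and>
      emeasure (\<pi> \<epsilon>) (S \<times> T) \<le> ennreal (exp (- (c0 - \<delta>) / \<epsilon>)) * (a S * b T)"
    using rectangle_mass_bounds[OF \<open>\<epsilon> > 0\<close>] by blast
  interpret \<pi>: prob_space "\<pi> \<epsilon>"
    by (rule prob_space_\<pi>[OF \<open>\<epsilon> > 0\<close>])
  define e where "e i j = - c (X i) (Y j) / \<epsilon>" for i j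
  have \<sigma>_less: "\<sigma> j < k" if "j < k" for j
    using permutes_in_image[OF \<sigma>] that by auto
  have "emeasure (\<pi> \<epsilon>) (S j \<times> T j) \<le> ennreal (exp (e j j + \<delta> / \<epsilon>)) * (a (S j) * b (T j))"
    and "ennreal (exp (e j (\<sigma> j) - \<delta> / \<epsilon>)) * (a (S j) * b (T (\<sigma> j))) \<le> emeasure (\<pi> \<epsilon>) (S j \<times> T (\<sigma> j))"
    if "j < k" for j
    using bounds[OF assms(3,4) close[OF that that]] bounds[OF assms(3,4) close[OF that \<sigma>_less[OF that]]]
    by (simp_all add: e_def diff_divide_distrib add_divide_distrib)
  note upper = this(1) and lower = this(2)
  have gap: "(\<Sum>j<k. e j j + \<delta> / \<epsilon>) =
      (2 * real k * \<delta> - ((\<Sum>j<k. c (X j) (Y j)) - (\<Sum>j<k. c (X j) (Y (\<sigma> j))))) / \<epsilon> +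
      (\<Sum>j<k. e j (\<sigma> j) - \<delta> / \<epsilon>)"
    using \<open>\<epsilon> > 0\<close> by (simp add: e_def sum.distrib sum_subtractf sum_negf sum_divide_distrib[symmetric] field_simps)
  have "(\<Prod>j<k. emeasure (\<pi> \<epsilon>) (S j \<times> T j)) \<le> (\<Prod>j<k. ennreal (exp (e j j + \<delta> / \<epsilon>)) * (a (S j) * b (T j)))"
    by (rule prod_mono_ennreal) (use upper in auto)
  also have "\<dots> = ennreal (exp (\<Sum>j<k. e j j + \<delta> / \<epsilon>)) * ((\<Prod>j<k. a (S j)) * (\<Prod>j<k. b (T j)))"
    by (simp add: exp_sum prod.distrib prod_ennreal)
  also have "(\<Prod>j<k. b (T j)) = (\<Prod>j<k. b (T (\<sigma> j)))"
    using prod.permute[OF \<sigma>, of "\<lambda>j. b (T j)"] by (simp add: comp_def)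
  also have "ennreal (exp (\<Sum>j<k. e j j + \<delta> / \<epsilon>)) * ((\<Prod>j<k. a (S j)) * (\<Prod>j<k. b (T (\<sigma> j)))) =
      ennreal (exp ((2 * real k * \<delta> - ((\<Sum>j<k. c (X j) (Y j)) - (\<Sum>j<k. c (X j) (Y (\<sigma> j))))) / \<epsilon>)) *
      (\<Prod>j<k. ennreal (exp (e j (\<sigma> j) - \<delta> / \<epsilon>)) * (a (S j) * b (T (\<sigma> j))))"
    unfolding gap by (simp add: exp_add exp_sum prod.distrib prod_ennreal ennreal_mult'' mult_ac)
  also have "\<dots> \<le> ennreal (exp ((2 * real k * \<delta> - ((\<Sum>j<k. c (X j) (Y j)) - (\<Sum>j<k. c (X j) (Y (\<sigma> j))))) / \<epsilon>)) *
      (\<Prod>j<k. emeasure (\<pi> \<epsilon>) (S j \<times> T (\<sigma> j)))"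
    by (intro mult_left_mono prod_mono_ennreal) (use lower in auto)
  finally show ?thesis
    by (simp add: \<pi>.emeasure_eq_measure prod_ennreal prod_nonneg ennreal_mult''[symmetric]
        ennreal_le_iff)
qed

lemma eventually_cyclic_product_inequality:
  assumes "\<delta> > 0"
  shows "\<forall>\<^sub>F r in at_right 0. \<forall>\<epsilon>>0. (\<Prod>j<k. measure (\<pi> \<epsilon>) (ball (X j) r \<times> ball (Y j) r)) \<le>
    exp ((2 * real k * \<delta> - cyclic_gain c k X Y) / \<epsilon>) *
    (\<Prod>j<k. measure (\<pi> \<epsilon>) (ball (X j) r \<times> ball (Y (cyc_pred k j)) r))"
proof -
  have "\<forall>\<^sub>F r in at_right 0. \<forall>p\<in>{..<k} \<times> {..<k}. ball (X (fst p)) r \<times> ball (Y (snd p)) r \<subseteq>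
      {z. \<bar>c (fst z) (snd z) - c (X (fst p)) (Y (snd p))\<bar> < \<delta>}"
    using \<open>\<delta> > 0\<close> continuous_on_cost
    by (intro eventually_ball_finite ballI eventually_ball_times_ball_subset open_Collect_less)
       (auto intro!: continuous_intros)
  then show ?thesis
  proof eventually_elim
    case (elim r)
    have "\<bar>c u v - c (X i) (Y j)\<bar> \<le> \<delta>"
      if "i < k" "j < k" "u \<in> ball (X i) r" "v \<in> ball (Y j) r" for i j u v
      using elim that by fastforce
    then show ?case
      unfolding cyclic_gain_def by (auto intro!: product_inequality[OF _ cyc_pred_permutes])
  qed
qed

end

locale entropic_limit = cyclically_invariant_family \<mu> \<nu> c \<pi>
  for \<mu> :: "'a::polish_space measure" and \<nu> :: "'b::polish_space measure"
    and c :: "'a \<Rightarrow> 'b \<Rightarrow> real" and \<pi> :: "real \<Rightarrow> ('a \<times> 'b) measure" +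
  fixes \<pi>\<^sub>s :: "('a \<times> 'b) measure"
  assumes coupling_limit: "coupling \<mu> \<nu> \<pi>\<^sub>s"
    and weak_conv: "weak_conv_filter \<pi> \<pi>\<^sub>s (at_right 0)"
begin

lemma prob_space_limit: "prob_space \<pi>\<^sub>s"
  and sets_limit: "sets \<pi>\<^sub>s = sets borel"
  using coupling_limit sets_pair_measure_borel by (auto simp: coupling_def)

lemma support_box_lower_bound:
  assumes "(x, y) \<in> msupport \<pi>\<^sub>s" "r > 0"
  shows "\<exists>L>0. \<forall>\<^sub>F \<epsilon> in at_right 0. L \<le> measure (\<pi> \<epsilon>) (ball x r \<times> ball y r)"
proof -
  obtain L where "L > 0" and L: "\<forall>\<^sub>F \<epsilon> in at_right 0. L \<le> measure (\<pi> \<epsilon>) (ball (x, y) r)"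
    by (rule weak_conv_measure_ball_lower_bound[OF weak_conv eventually_prob_space_\<pi> prob_space_limit
        sets_limit assms])
  have ball_subset: "ball (x, y) r \<subseteq> ball x r \<times> ball y r"
  proof
    fix z assume "z \<in> ball (x, y) r"
    then show "z \<in> ball x r \<times> ball y r"
      using dist_fst_le[of "(x, y)" z] dist_snd_le[of "(x, y)" z] by (auto simp: mem_Times_iff)
  qed
  from L eventually_prob_space_\<pi>
  have "\<forall>\<^sub>F \<epsilon> in at_right 0. L \<le> measure (\<pi> \<epsilon>) (ball x r \<times> ball y r)"
  proof eventually_elim
    case (elim \<epsilon>)
    then interpret prob_space "\<pi> \<epsilon>" by simp
    have "measure (\<pi> \<epsilon>) (ball (x, y) r) \<le> measure (\<pi> \<epsilon>) (ball x r \<times> ball y r)"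
      using elim ball_subset by (intro finite_measure_mono) (auto intro: borel_open open_Times)
    with elim show ?case by linarith
  qed
  with \<open>L > 0\<close> show ?thesis by blast
qed

lemma support_product_lower_bound:
  fixes k :: nat
  assumes "\<forall>i<k. (X i, Y i) \<in> msupport \<pi>\<^sub>s" "r > 0"
  obtains L where "L > 0"
    "\<forall>\<^sub>F \<epsilon> in at_right 0. L \<le> (\<Prod>i<k. measure (\<pi> \<epsilon>) (ball (X i) r \<times> ball (Y i) r))"
proof -
  have "\<forall>i\<in>{..<k}. \<exists>L. L > 0 \<and>
      (\<forall>\<^sub>F \<epsilon> in at_right 0. L \<le> measure (\<pi> \<epsilon>) (ball (X i) r \<times> ball (Y i) r))"
    using assms support_box_lower_bound by simp
  then obtain Lf where Lf: "\<forall>i\<in>{..<k}. Lf i > 0 \<and>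
      (\<forall>\<^sub>F \<epsilon> in at_right 0. Lf i \<le> measure (\<pi> \<epsilon>) (ball (X i) r \<times> ball (Y i) r))"
    by (rule bchoice[THEN exE])
  then have "\<forall>\<^sub>F \<epsilon> in at_right 0. \<forall>i\<in>{..<k}. Lf i \<le> measure (\<pi> \<epsilon>) (ball (X i) r \<times> ball (Y i) r)"
    by (intro eventually_ball_finite) auto
  then have "\<forall>\<^sub>F \<epsilon> in at_right 0. (\<Prod>i<k. Lf i) \<le> (\<Prod>i<k. measure (\<pi> \<epsilon>) (ball (X i) r \<times> ball (Y i) r))"
  proof eventually_elim
    case (elim \<epsilon>)
    with Lf show ?case
      by (intro prod_mono) (auto intro: less_imp_le)
  qed
  moreover have "(\<Prod>i<k. Lf i) > 0"
    using Lf by (intro prod_pos) auto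
  ultimately show ?thesis using that by blast
qed

lemma eventually_cycle_box_lower_bound:
  fixes k :: nat
  assumes support: "\<forall>i<k. (X i, Y i) \<in> msupport \<pi>\<^sub>s" and "j < k" and "t < cyclic_gain c k X Y"
  shows "\<forall>\<^sub>F r in at_right 0. \<exists>L>0. \<forall>\<^sub>F \<epsilon> in at_right 0.
    L * exp (t / \<epsilon>) \<le> measure (\<pi> \<epsilon>) (ball (X j) r \<times> ball (Y (cyc_pred k j)) r)"
proof -
  define \<delta> where "\<delta> = (cyclic_gain c k X Y - t) / (2 * k)"
  have "\<delta> > 0" and exponent: "2 * real k * \<delta> - cyclic_gain c k X Y = - t"
    using assms by (auto simp: \<delta>_def)
  from eventually_cyclic_product_inequality[OF \<open>\<delta> > 0\<close>, where k=k and X=X and Y=Y] eventually_at_right_less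
  show ?thesis
  proof eventually_elim
    case (elim r)
    then have product: "\<And>\<epsilon>. \<epsilon> > 0 \<Longrightarrow> (\<Prod>i<k. measure (\<pi> \<epsilon>) (ball (X i) r \<times> ball (Y i) r)) \<le>
        exp (- t / \<epsilon>) * (\<Prod>i<k. measure (\<pi> \<epsilon>) (ball (X i) r \<times> ball (Y (cyc_pred k i)) r))"
      by (simp add: exponent)
    obtain L where "L > 0"
      and L: "\<forall>\<^sub>F \<epsilon> in at_right 0. L \<le> (\<Prod>i<k. measure (\<pi> \<epsilon>) (ball (X i) r \<times> ball (Y i) r))"
      using support_product_lower_bound[OF support] elim by blast
    from L eventually_prob_space_\<pi> eventually_at_right_less
    have "\<forall>\<^sub>F \<epsilon> in at_right 0. L * exp (t / \<epsilon>) \<le> measure (\<pi> \<epsilon>) (ball (X j) r \<times> ball (Y (cyc_pred k j)) r)"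
    proof eventually_elim
      case (elim \<epsilon>)
      then interpret prob_space "\<pi> \<epsilon>" by simp
      have "L \<le> exp (- t / \<epsilon>) * (\<Prod>i<k. prob (ball (X i) r \<times> ball (Y (cyc_pred k i)) r))"
        using elim product by (blast intro: order_trans)
      also have "\<dots> \<le> exp (- t / \<epsilon>) * prob (ball (X j) r \<times> ball (Y (cyc_pred k j)) r)"
        using \<open>j < k\<close> by (intro mult_left_mono prod_prob_le_factor) auto
      finally show ?case
        by (simp add: exp_minus field_simps)
    qed
    with \<open>L > 0\<close> show ?case by blast
  qed
qed

lemma c_cyclically_monotone_support: "c_cyclically_monotone c (msupport \<pi>\<^sub>s)"
  unfolding c_cyclically_monotone_def
proof (intro allI impI)
  fix k :: nat and X :: "nat \<Rightarrow> 'a" and Y :: "nat \<Rightarrow> 'b"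
  assume support: "\<forall>j<k. (X j, Y j) \<in> msupport \<pi>\<^sub>s"
  show "cyclic_gain c k X Y \<le> 0"
  proof (rule ccontr)
    define t where "t = cyclic_gain c k X Y / 2"
    assume "\<not> cyclic_gain c k X Y \<le> 0"
    then have "0 < t" "t < cyclic_gain c k X Y"
      by (auto simp: t_def)
    moreover from this have "0 < k"
      by (cases k) (auto simp: cyclic_gain_def)
    ultimately obtain r L where "L > 0" and L: "\<forall>\<^sub>F \<epsilon> in at_right 0.
        L * exp (t / \<epsilon>) \<le> measure (\<pi> \<epsilon>) (ball (X 0) r \<times> ball (Y (cyc_pred k 0)) r)"
      using eventually_happens'[OF _ eventually_cycle_box_lower_bound[OF support]] by fastforce
    from L eventually_prob_space_\<pi> eventually_exp_divide_at_right_gt_1[OF \<open>L > 0\<close> \<open>t > 0\<close>]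
    have "\<forall>\<^sub>F \<epsilon> in at_right 0. L * exp (t / \<epsilon>) \<le> 1 \<and> 1 < L * exp (t / \<epsilon>)"
    proof eventually_elim
      case (elim \<epsilon>)
      then show ?case
        using prob_space.prob_le_1[of "\<pi> \<epsilon>"] by (meson order_trans)
    qed
    then show False
      using eventually_happens'[of "at_right (0::real)"] by force
  qed
qed

(*
  The projections of Gamma are in general only analytic, so the relatively open U need not be
  Borel; this full-measure Borel part of X_0 x Y_0 is what makes U measurable for the completion.
*)
lemma borel_full_measure_subset:
  "\<exists>H \<in> sets borel. H \<subseteq> fst ` msupport \<pi>\<^sub>s \<times> snd ` msupport \<pi>\<^sub>s \<and> - H \<in> null_sets (\<mu> \<Otimes>\<^sub>M \<nu>)"
proof -
  have marginals: "distr \<pi>\<^sub>s \<mu> fst = \<mu>" "distr \<pi>\<^sub>s \<nu> snd = \<nu>"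
    using coupling_limit by (simp_all add: coupling_def)
  note full_measure =
    continuous_image_full_measure[OF prob_space_limit sets_limit _ continuous_on_fst[OF continuous_on_id]
      marginals(1) borel_closed[OF closed_msupport] emeasure_compl_msupport[OF sets_limit]]
    continuous_image_full_measure[OF prob_space_limit sets_limit _ continuous_on_snd[OF continuous_on_id]
      marginals(2) borel_closed[OF closed_msupport] emeasure_compl_msupport[OF sets_limit]]
  obtain F G where F: "F \<in> sets borel" "F \<subseteq> fst ` msupport \<pi>\<^sub>s" "emeasure \<mu> (- F) = 0"
    and G: "G \<in> sets borel" "G \<subseteq> snd ` msupport \<pi>\<^sub>s" "emeasure \<nu> (- G) = 0"
    using full_measure(1)[OF sets_\<mu>] full_measure(2)[OF sets_\<nu>] by blast
  interpret \<nu>: prob_space \<nu> by (rule prob_\<nu>)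
  have "- (F \<times> G) \<in> null_sets (\<mu> \<Otimes>\<^sub>M \<nu>)"
    using F G sets_\<mu> sets_\<nu> space_\<mu> space_\<nu> by (intro \<nu>.compl_Times_in_null_sets) simp_all
  moreover have "F \<times> G \<in> sets borel"
    using F(1) G(1) sets_\<mu> sets_\<nu> by (simp flip: sets_pair_measure_borel)
  moreover have "F \<times> G \<subseteq> fst ` msupport \<pi>\<^sub>s \<times> snd ` msupport \<pi>\<^sub>s"
    using F(2) G(2) by (rule Sigma_mono)
  ultimately show ?thesis
    by (intro bexI[of _ "F \<times> G"]) simp_all
qed

lemma emeasure_le_completion:
  assumes "open V" "S \<subseteq> V" "S \<in> sets borel" "\<epsilon> > 0"
  defines "U \<equiv> (fst ` msupport \<pi>\<^sub>s \<times> snd ` msupport \<pi>\<^sub>s) \<inter> V"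
  shows "emeasure (\<pi> \<epsilon>) S \<le> emeasure (completion (\<pi> \<epsilon>)) U"
proof -
  obtain H where H: "H \<in> sets borel" "H \<subseteq> fst ` msupport \<pi>\<^sub>s \<times> snd ` msupport \<pi>\<^sub>s"
    "- H \<in> null_sets (\<mu> \<Otimes>\<^sub>M \<nu>)"
    using borel_full_measure_subset by blast
  have null: "- H \<in> null_sets (\<pi> \<epsilon>)"
    using H(3) null_sets_subset_\<pi>[OF \<open>\<epsilon> > 0\<close>] by blast
  have VH: "V \<inter> H \<in> sets (\<pi> \<epsilon>)"
    using \<open>open V\<close> H(1) sets_\<pi>[OF \<open>\<epsilon> > 0\<close>] by auto
  have U_eq: "U = (V \<inter> H) \<union> (U - H)"
    using H(2) by (auto simp: U_def)
  have U: "U \<in> sets (completion (\<pi> \<epsilon>))"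
    by (rule sets_completionI[OF U_eq _ null VH]) auto
  have "emeasure (\<pi> \<epsilon>) S = emeasure (\<pi> \<epsilon>) (S - - H)"
    using emeasure_Diff_null_set[OF null] assms(3) sets_\<pi>[OF \<open>\<epsilon> > 0\<close>] by simp
  also have "\<dots> \<le> emeasure (\<pi> \<epsilon>) (V \<inter> H)"
    using \<open>S \<subseteq> V\<close> VH by (intro emeasure_mono) auto
  also have "\<dots> = emeasure (completion (\<pi> \<epsilon>)) (V \<inter> H)"
    using VH by simp
  also have "\<dots> \<le> emeasure (completion (\<pi> \<epsilon>)) U"
    using U U_eq by (intro emeasure_mono) auto
  finally show ?thesis .
qed

definition scaled_log_liminf :: "('a \<times> 'b) set \<Rightarrow> ereal" where
  "scaled_log_liminf U = Liminf (at_right 0) (\<lambda>\<epsilon>. ereal \<epsilon> * eln (emeasure (completion (\<pi> \<epsilon>)) U))"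

lemma cyclic_gain_le_scaled_log_liminf:
  fixes k :: nat
  assumes support: "\<forall>i<k. (X i, Y i) \<in> msupport \<pi>\<^sub>s" and "j < k"
    and U: "openin (top_of_set (fst ` msupport \<pi>\<^sub>s \<times> snd ` msupport \<pi>\<^sub>s)) U"
    and in_U: "(X j, Y (cyc_pred k j)) \<in> U"
  shows "ereal (cyclic_gain c k X Y) \<le> scaled_log_liminf U"
proof (rule dense_le)
  fix y assume "y < ereal (cyclic_gain c k X Y)"
  then obtain t where "y < ereal t" "t < cyclic_gain c k X Y"
    by (metis ereal_dense2 less_ereal.simps(1))
  obtain V where "open V" and U_eq: "U = (fst ` msupport \<pi>\<^sub>s \<times> snd ` msupport \<pi>\<^sub>s) \<inter> V"
    using U by (auto simp: openin_open)
  let ?box = "\<lambda>r. ball (X j) r \<times> ball (Y (cyc_pred k j)) r"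
  have "\<forall>\<^sub>F r in at_right 0. (\<exists>L>0. \<forall>\<^sub>F \<epsilon> in at_right 0. L * exp (t / \<epsilon>) \<le> measure (\<pi> \<epsilon>) (?box r))
      \<and> ?box r \<subseteq> V"
    using eventually_cycle_box_lower_bound[OF support \<open>j < k\<close> \<open>t < cyclic_gain c k X Y\<close>]
      eventually_ball_times_ball_subset[OF \<open>open V\<close>] in_U U_eq
    by (intro eventually_conj) auto
  then obtain r L where "L > 0" "?box r \<subseteq> V"
    and L: "\<forall>\<^sub>F \<epsilon> in at_right 0. L * exp (t / \<epsilon>) \<le> measure (\<pi> \<epsilon>) (?box r)"
    using eventually_happens'[of "at_right (0::real)"] by force
  from L eventually_prob_space_\<pi> eventually_at_right_less
  have "\<forall>\<^sub>F \<epsilon> in at_right 0. ennreal (L * exp (t / \<epsilon>)) \<le> emeasure (completion (\<pi> \<epsilon>)) U \<and>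
      emeasure (completion (\<pi> \<epsilon>)) U \<noteq> \<top>"
  proof eventually_elim
    case (elim \<epsilon>)
    then interpret prob_space "\<pi> \<epsilon>" by simp
    have "?box r \<in> sets borel"
      by (intro borel_open open_Times) auto
    then have "emeasure (\<pi> \<epsilon>) (?box r) \<le> emeasure (completion (\<pi> \<epsilon>)) U"
      unfolding U_eq using \<open>open V\<close> \<open>?box r \<subseteq> V\<close> elim by (intro emeasure_le_completion) auto
    moreover have "emeasure (completion (\<pi> \<epsilon>)) U \<le> 1"
      by (rule prob_space.emeasure_le_1[OF prob_space_completion])
    ultimately show ?case
      using elim by (auto simp: emeasure_eq_measure top_unique intro: order_trans[OF ennreal_leI])
  qed
  with \<open>L > 0\<close> have "ereal t \<le> scaled_log_liminf U"
    unfolding scaled_log_liminf_def by (rule Liminf_scaled_eln_ge)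
  with \<open>y < ereal t\<close> show "y \<le> scaled_log_liminf U"
    by simp
qed

lemma rockafellar_potential_le_scaled_log_liminf:
  assumes U: "openin (top_of_set (fst ` msupport \<pi>\<^sub>s \<times> snd ` msupport \<pi>\<^sub>s)) U"
    and "(a, y) \<in> U" "(x, y) \<in> msupport \<pi>\<^sub>s"
  shows "rockafellar_potential c (msupport \<pi>\<^sub>s) a b x + ereal (c x y - c a y) \<le> scaled_log_liminf U"
proof (rule rockafellar_potential_le_chain_bound)
  fix n xs ys y' assume chain: "(n, xs, ys) \<in> chains_from (msupport \<pi>\<^sub>s) a b y'"
  (* The pair (a, y) is the shifted pair with index 1 of this cycle. *)
  have "ereal (cyclic_gain c (Suc (Suc n)) (case_nat x xs) (case_nat y ys)) \<le> scaled_log_liminf U"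
    using chain assms
    by (intro cyclic_gain_le_scaled_log_liminf[OF _ _ U, where j=1])
       (auto simp: chains_from_def cyc_pred_def less_Suc_eq_le split: nat.split)
  with chain show "ereal (c x y + chain_cost c n xs ys - c x y' - c a y) \<le> scaled_log_liminf U"
    by (simp add: cyclic_gain_cons_chain chains_from_def)
qed

lemma minus_rate_I_le_scaled_log_liminf:
  assumes unique: "\<And>\<psi>1 \<psi>2. c_convex c \<psi>1 \<Longrightarrow> c_convex c \<psi>2 \<Longrightarrow>
      msupport \<pi>\<^sub>s \<subseteq> c_subdiff c \<psi>1 \<Longrightarrow> msupport \<pi>\<^sub>s \<subseteq> c_subdiff c \<psi>2 \<Longrightarrow>
      \<exists>C::real. \<forall>x \<in> fst ` msupport \<pi>\<^sub>s. \<psi>1 x - \<psi>2 x = ereal C"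
    and U: "openin (top_of_set (fst ` msupport \<pi>\<^sub>s \<times> snd ` msupport \<pi>\<^sub>s)) U"
    and "(x, y) \<in> U"
  shows "- rate_I c (msupport \<pi>\<^sub>s) x y \<le> scaled_log_liminf U"
proof -
  let ?\<Gamma> = "msupport \<pi>\<^sub>s"
  obtain x' y' where xy': "(x, y') \<in> ?\<Gamma>" and x'y: "(x', y) \<in> ?\<Gamma>"
    using openin_subset[OF U] \<open>(x, y) \<in> U\<close> by force
  let ?\<psi>1 = "rockafellar_potential c ?\<Gamma> x' y" and ?\<psi>2 = "rockafellar_potential c ?\<Gamma> x y'"
  note monotone = c_cyclically_monotone_support
  obtain C where C: "\<forall>z \<in> fst ` ?\<Gamma>. ?\<psi>1 z - ?\<psi>2 z = ereal C"
    using unique[OF rockafellar_potential_c_convex[OF x'y monotone] rockafellar_potential_c_convex[OF xy' monotone]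
        c_subdiff_rockafellar_potential[OF x'y monotone] c_subdiff_rockafellar_potential[OF xy' monotone]]
    by blast
  have "?\<psi>1 x = ereal C" "?\<psi>2 x' = ereal (- C)"
    using C xy' x'y rockafellar_potential_anchor[OF x'y monotone] rockafellar_potential_anchor[OF xy' monotone]
    by (force simp: ereal_uminus_eq_reorder)+
  moreover have "?\<psi>1 x + ereal (c x y - c x' y) \<le> rate_I c ?\<Gamma> x y"
    by (rule rockafellar_potential_le_rate_I)
  moreover have "?\<psi>2 x' + ereal (c x' y - c x y) \<le> scaled_log_liminf U"
    by (rule rockafellar_potential_le_scaled_log_liminf[OF U \<open>(x, y) \<in> U\<close> x'y])
  ultimately show ?thesis
    by (cases "rate_I c ?\<Gamma> x y"; cases "scaled_log_liminf U") auto
qed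

end

theorem corollary4p7:
  fixes \<mu> :: "'a::polish_space measure" and \<nu> :: "'b::polish_space measure"
    and c :: "'a \<Rightarrow> 'b \<Rightarrow> real"
    and \<pi> :: "real \<Rightarrow> ('a \<times> 'b) measure" and \<pi>\<^sub>s :: "('a \<times> 'b) measure"
    and U :: "('a \<times> 'b) set"
  assumes "prob_space \<mu>" "sets \<mu> = sets borel"
    and "prob_space \<nu>" "sets \<nu> = sets borel"
    and "continuous_on UNIV (\<lambda>(x, y). c x y)" "\<And>x y. c x y \<ge> 0"
    and "\<And>\<epsilon>. \<epsilon> > 0 \<Longrightarrow> cyc_inv_coupling c \<epsilon> \<mu> \<nu> (\<pi> \<epsilon>)"
    and "coupling \<mu> \<nu> \<pi>\<^sub>s"
    and "weak_conv_filter \<pi> \<pi>\<^sub>s (at_right 0)"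
    and "\<And>\<psi>1 \<psi>2. c_convex c \<psi>1 \<Longrightarrow> c_convex c \<psi>2 \<Longrightarrow>
           msupport \<pi>\<^sub>s \<subseteq> c_subdiff c \<psi>1 \<Longrightarrow> msupport \<pi>\<^sub>s \<subseteq> c_subdiff c \<psi>2 \<Longrightarrow>
           \<exists>C::real. \<forall>x \<in> fst ` msupport \<pi>\<^sub>s. \<psi>1 x - \<psi>2 x = ereal C"
    and "openin (top_of_set (fst ` msupport \<pi>\<^sub>s \<times> snd ` msupport \<pi>\<^sub>s)) U"
  shows "Liminf (at_right 0) (\<lambda>\<epsilon>. ereal \<epsilon> * eln (emeasure (completion (\<pi> \<epsilon>)) U))
           \<ge> - (INF z \<in> U. rate_I c (msupport \<pi>\<^sub>s) (fst z) (snd z))"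
proof -
  interpret entropic_limit \<mu> \<nu> c \<pi> \<pi>\<^sub>s
    by (intro entropic_limit.intro cyclically_invariant_family.intro entropic_limit_axioms.intro)
       (fact assms)+
  have "- rate_I c (msupport \<pi>\<^sub>s) x y \<le> scaled_log_liminf U" if "(x, y) \<in> U" for x y
    by (rule minus_rate_I_le_scaled_log_liminf[OF assms(10,11) that])
  then have "- scaled_log_liminf U \<le> rate_I c (msupport \<pi>\<^sub>s) (fst z) (snd z)" if "z \<in> U" for z
    using that ereal_uminus_le_reorder by (cases z) simp
  then have "- scaled_log_liminf U \<le> (INF z \<in> U. rate_I c (msupport \<pi>\<^sub>s) (fst z) (snd z))"
    by (rule INF_greatest)
  then show ?thesis
    unfolding scaled_log_liminf_def by (subst ereal_uminus_le_reorder)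
qed

end
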